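(* Suppose $f$ is convex, Assumptions 1 and 2 hold, $H_k\succeq0$ for all $k$, and there is $\eta\in[0,1)$ such that every $d^k$ satisfies the $\eta$-inexactness condition for $Q_k=Q^{x^k}_{H_k}$. Then for Algorithm 1: (1) For every $k$ with $F(x^k)-F^*\ge (x^k-P_\Omega(x^k))^TH_k(x^k-P_\Omega(x^k))$, $$F(x^{k+1})-F^*\le\left(1-\frac{(1-\eta)\gamma\alpha_k}{2}\right)(F(x^k)-F^* ).$$ (2) Let $k_0$ be the smallest index $k$ with $F(x^k)-F^*<MR_0^2$. Then for all $k\ge k_0$, $$F(x^k)-F^*\le\frac{2MR_0^2}{\gamma(1-\eta)\sum_{t=k_0}^{k-1}\alpha_t+2}.$$ If there exists $\bar\alpha>0$ with $\alpha_k\ge\bar\alpha$ for all $k$, then $$k_0\le\max\left\{0,\ 1+\frac{2}{\gamma(1-\eta)\bar\alpha}\log\frac{F(x^0)-F^*}{MR_0^2}\right\}.$$ For Algorithm 2, if the initial matrices satisfy $m_0I\preceq H_k^0\preceq M_0I$ for all $k$ (with $M_0>0$, $m_0\le M_0$, and $m_0>0$ for Variant 1) and the final $H_k\succeq0$, the same conclusions hold with $\alpha_k\equiv1$, $\bar\alpha=1$, and $M$ replaced by $\tilde M_1(\eta)$ for Variant 1 and by $\tilde M_2(\eta)$ for Variant 2.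
   Context: Problem setting: $F(x)=f(x)+\psi(x)$ on $\mathbb{R}^n$, $F^*=\inf F$, $\Omega=\{x:F(x)=F^*\}$, $P_\Omega$ the Euclidean projection onto $\Omega$, $\|\cdot\|$ the Euclidean / spectral norm. Assumption 1: $f$ is differentiable with $L$-Lipschitz continuous gradient ($L>0$); $\psi:\mathbb{R}^n\to\mathbb{R}\cup\{+\infty\}$ is convex, proper and closed; $F$ is bounded below; $\Omega$ is nonempty. For $x\in\mathbb{R}^n$ and symmetric $H$, $Q^x_H(d)\coloneqq\nabla f(x)^Td+\frac12d^THd+\psi(x+d)-\psi(x)$, $Q^*=\inf_dQ^x_H(d)$; $d$ satisfies the $\eta$-inexactness condition if $Q^x_H(d)\le(1-\eta)Q^*$. Algorithm 1: given $\beta,\gamma\in(0,1)$, $x^0$, fixed $\eta\in[0,1)$; for $k=0,1,\dots$: choose symmetric $H_k$ with $Q_k\coloneqq Q^{x^k}_{H_k}$ strongly convex; compute $d^k$ satisfying the $\eta$-inexactness condition for $Q_k$; let $\Delta_k=\nabla f(x^k)^Td^k+\psi(x^k+d^k)-\psi(x^k)$; let $\alpha_k=\beta^i$ for the smallest nonnegative integer $i$ with $F(x^k+\alpha_kd^k)\le F(x^k)+\alpha_k\gamma\Delta_k$; set $x^{k+1}=x^k+\alpha_kd^k$. Algorithm 2: given $\beta\in(0,1)$, $\gamma\in(0,1]$, $x^0$, fixed $\eta\in[0,1)$; for each $k$: choose symmetric $H^0_k$ (in Variant 1, $H^0_k\succ0$); set $\alpha_k\leftarrow1$, $H_k\leftarrow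 H^0_k$, compute $d^k$ satisfying the $\eta$-inexactness condition for $Q^{x^k}_{H_k}$; while $F(x^k)-F(x^k+d^k)\ge-\gamma Q^{x^k}_{H_k}(d^k)\ge0$ fails: Variant 1 sets $\alpha_k\leftarrow\beta\alpha_k$, $H_k\leftarrow H^0_k/\alpha_k$; Variant 2 sets $H_k\leftarrow H^0_k+\alpha_k^{-1}I$, then $\alpha_k\leftarrow\beta\alpha_k$; then $d^k$ is recomputed satisfying the $\eta$-inexactness condition. Finally $x^{k+1}=x^k+d^k$; "final $H_k$" is the accepted matrix. Assumption 2: there exist finite $R_0,M>0$ with $\sup_{x:F(x)\le F(x^0)}\|x-P_\Omega(x)\|=R_0<\infty$ and $\|H_k\|\le M$ for all $k$. Constants: $\tilde M_2(\eta)\coloneqq M_0+\max\{1,\frac1\beta(\frac{L(1+\sqrt\eta)}{2-\gamma(1-\sqrt\eta)}-m_0)\}$, $\tilde M_1(\eta)\coloneqq M_0\max\{1,\frac{L(1+\sqrt\eta)}{\beta(2-\gamma(1-\sqrt\eta))m_0}\}$. *)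

theory Defs
  imports "HOL-Analysis.Analysis"
begin

text \<open>The extended-valued convex function psi : R^n -> R \<union> {+\<infinity>} is represented by a
  real-valued function psi together with its effective domain D (psi = +\<infinity> outside D).
  Hence F = f + psi on D and F = +\<infinity> outside D.\<close>

definition sym_mat :: "real^'n^'n \<Rightarrow> bool" where
  "sym_mat H \<longleftrightarrow> transpose H = H"

definition psd :: "real^'n^'n \<Rightarrow> bool" where
  "psd H \<longleftrightarrow> (\<forall>v. 0 \<le> v \<bullet> (H *v v))"

definition pd :: "real^'n^'n \<Rightarrow> bool" where
  "pd H \<longleftrightarrow> (\<forall>v. v \<noteq> 0 \<longrightarrow> 0 < v \<bullet> (H *v v))"

definition loewner_between :: "real \<Rightarrow> real^'n^'n \<Rightarrow> real \<Rightarrow> bool" where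
  "loewner_between m H M \<longleftrightarrow>
     (\<forall>v. m * (v \<bullet> v) \<le> v \<bullet> (H *v v) \<and> v \<bullet> (H *v v) \<le> M * (v \<bullet> v))"

definition mnorm :: "real^'n^'n \<Rightarrow> real" where
  "mnorm H = onorm (\<lambda>v. H *v v)"

definition assumption1 ::
  "(real^'n \<Rightarrow> real) \<Rightarrow> (real^'n \<Rightarrow> real^'n) \<Rightarrow> real \<Rightarrow> (real^'n \<Rightarrow> real) \<Rightarrow> (real^'n) set \<Rightarrow> bool" where
  "assumption1 f g L psi D \<longleftrightarrow>
     L > 0 \<and>
     (\<forall>x. (f has_derivative (\<lambda>h. g x \<bullet> h)) (at x)) \<and>
     (\<forall>x y. norm (g x - g y) \<le> L * norm (x - y)) \<and>
     D \<noteq> {} \<and> convex D \<and> convex_on D psi \<and>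
     closed {(x, t). x \<in> D \<and> psi x \<le> t} \<and>
     bdd_below ((\<lambda>x. f x + psi x) ` D)"

definition Fv :: "(real^'n \<Rightarrow> real) \<Rightarrow> (real^'n \<Rightarrow> real) \<Rightarrow> real^'n \<Rightarrow> real" where
  "Fv f psi x = f x + psi x"

definition Fstar :: "(real^'n \<Rightarrow> real) \<Rightarrow> (real^'n \<Rightarrow> real) \<Rightarrow> (real^'n) set \<Rightarrow> real" where
  "Fstar f psi D = Inf (Fv f psi ` D)"

definition Omega :: "(real^'n \<Rightarrow> real) \<Rightarrow> (real^'n \<Rightarrow> real) \<Rightarrow> (real^'n) set \<Rightarrow> (real^'n) set" where
  "Omega f psi D = {x \<in> D. Fv f psi x = Fstar f psi D}"

definition PO :: "(real^'n \<Rightarrow> real) \<Rightarrow> (real^'n \<Rightarrow> real) \<Rightarrow> (real^'n) set \<Rightarrow> real^'n \<Rightarrow> real^'n" where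
  "PO f psi D x = closest_point (Omega f psi D) x"

definition level_radius ::
  "(real^'n \<Rightarrow> real) \<Rightarrow> (real^'n \<Rightarrow> real) \<Rightarrow> (real^'n) set \<Rightarrow> real^'n \<Rightarrow> real \<Rightarrow> bool" where
  "level_radius f psi D x0 R0 \<longleftrightarrow>
     (let S = {norm (x - PO f psi D x) | x. x \<in> D \<and> Fv f psi x \<le> Fv f psi x0}
      in bdd_above S \<and> Sup S = R0)"

definition Qm ::
  "(real^'n \<Rightarrow> real^'n) \<Rightarrow> (real^'n \<Rightarrow> real) \<Rightarrow> (real^'n) set \<Rightarrow> real^'n \<Rightarrow> real^'n^'n \<Rightarrow> real^'n \<Rightarrow> ereal" where
  "Qm g psi D x H d =
     (if x + d \<in> D then ereal (g x \<bullet> d + (1/2) * (d \<bullet> (H *v d)) + psi (x + d) - psi x) else \<infinity>)"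

definition Qstar ::
  "(real^'n \<Rightarrow> real^'n) \<Rightarrow> (real^'n \<Rightarrow> real) \<Rightarrow> (real^'n) set \<Rightarrow> real^'n \<Rightarrow> real^'n^'n \<Rightarrow> ereal" where
  "Qstar g psi D x H = (INF d. Qm g psi D x H d)"

definition inexact ::
  "real \<Rightarrow> (real^'n \<Rightarrow> real^'n) \<Rightarrow> (real^'n \<Rightarrow> real) \<Rightarrow> (real^'n) set \<Rightarrow> real^'n \<Rightarrow> real^'n^'n \<Rightarrow> real^'n \<Rightarrow> bool" where
  "inexact eta g psi D x H d \<longleftrightarrow> Qm g psi D x H d \<le> ereal (1 - eta) * Qstar g psi D x H"

definition Q_strongly_convex ::
  "(real^'n \<Rightarrow> real^'n) \<Rightarrow> (real^'n \<Rightarrow> real) \<Rightarrow> (real^'n) set \<Rightarrow> real^'n \<Rightarrow> real^'n^'n \<Rightarrow> bool" where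
  "Q_strongly_convex g psi D x H \<longleftrightarrow>
     (\<exists>\<mu>>0. \<forall>d1 d2 t. x + d1 \<in> D \<longrightarrow> x + d2 \<in> D \<longrightarrow> 0 \<le> t \<longrightarrow> t \<le> 1 \<longrightarrow>
        Qm g psi D x H (t *\<^sub>R d1 + (1 - t) *\<^sub>R d2)
          \<le> ereal t * Qm g psi D x H d1 + ereal (1 - t) * Qm g psi D x H d2
             - ereal (\<mu> / 2 * t * (1 - t) * (norm (d1 - d2))\<^sup>2))"

definition alg1_run ::
  "(real^'n \<Rightarrow> real) \<Rightarrow> (real^'n \<Rightarrow> real^'n) \<Rightarrow> (real^'n \<Rightarrow> real) \<Rightarrow> (real^'n) set \<Rightarrow>
   real \<Rightarrow> real \<Rightarrow> real \<Rightarrow> (nat \<Rightarrow> real^'n) \<Rightarrow> (nat \<Rightarrow> real^'n^'n) \<Rightarrow> (nat \<Rightarrow> real^'n) \<Rightarrow> (nat \<Rightarrow> real) \<Rightarrow> bool" where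
  "alg1_run f g psi D \<beta> \<gamma> \<eta> x H d \<alpha> \<longleftrightarrow>
     0 < \<beta> \<and> \<beta> < 1 \<and> 0 < \<gamma> \<and> \<gamma> < 1 \<and> 0 \<le> \<eta> \<and> \<eta> < 1 \<and> x 0 \<in> D \<and>
     (\<forall>k. sym_mat (H k) \<and> Q_strongly_convex g psi D (x k) (H k) \<and>
          inexact \<eta> g psi D (x k) (H k) (d k) \<and>
          (let \<Delta> = g (x k) \<bullet> d k + psi (x k + d k) - psi (x k) in
             \<alpha> k = \<beta> ^ (LEAST i. x k + \<beta> ^ i *\<^sub>R d k \<in> D \<and>
                       Fv f psi (x k + \<beta> ^ i *\<^sub>R d k) \<le> Fv f psi (x k) + \<beta> ^ i * \<gamma> * \<Delta>)) \<and>
          x (Suc k) = x k + \<alpha> k *\<^sub>R d k)"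

text \<open>Trial matrices of Algorithm 2 at inner trial j (j = number of failed tests so far).\<close>
definition trial_H :: "nat \<Rightarrow> real \<Rightarrow> real^'n^'n \<Rightarrow> nat \<Rightarrow> real^'n^'n" where
  "trial_H variant \<beta> H0 j =
     (if variant = 1 then (1 / \<beta> ^ j) *\<^sub>R H0
      else (if j = 0 then H0 else H0 + (1 / \<beta> ^ (j - 1)) *\<^sub>R mat 1))"

definition alg2_accept ::
  "(real^'n \<Rightarrow> real) \<Rightarrow> (real^'n \<Rightarrow> real^'n) \<Rightarrow> (real^'n \<Rightarrow> real) \<Rightarrow> (real^'n) set \<Rightarrow>
   real \<Rightarrow> real^'n \<Rightarrow> real^'n^'n \<Rightarrow> real^'n \<Rightarrow> bool" where
  "alg2_accept f g psi D \<gamma> x H d \<longleftrightarrow>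
     - ereal \<gamma> * Qm g psi D x H d \<le> ereal (Fv f psi x - Fv f psi (x + d)) \<and>
     0 \<le> - ereal \<gamma> * Qm g psi D x H d"

text \<open>At outer iteration k the inner
  loop produces trial directions dt k j (j = 0..J k), each eta-inexact for the current trial
  matrix; J k is the first trial that passes the acceptance test.  H k, d k are the accepted
  (final) matrix and direction.\<close>
definition alg2_run ::
  "nat \<Rightarrow> (real^'n \<Rightarrow> real) \<Rightarrow> (real^'n \<Rightarrow> real^'n) \<Rightarrow> (real^'n \<Rightarrow> real) \<Rightarrow> (real^'n) set \<Rightarrow>
   real \<Rightarrow> real \<Rightarrow> real \<Rightarrow> real \<Rightarrow> real \<Rightarrow>
   (nat \<Rightarrow> real^'n) \<Rightarrow> (nat \<Rightarrow> real^'n^'n) \<Rightarrow> (nat \<Rightarrow> nat \<Rightarrow> real^'n) \<Rightarrow> (nat \<Rightarrow> nat) \<Rightarrow>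
   (nat \<Rightarrow> real^'n^'n) \<Rightarrow> (nat \<Rightarrow> real^'n) \<Rightarrow> bool" where
  "alg2_run variant f g psi D \<beta> \<gamma> \<eta> m0 M0 x H0 dt J H d \<longleftrightarrow>
     (variant = 1 \<or> variant = 2) \<and>
     0 < \<beta> \<and> \<beta> < 1 \<and> 0 < \<gamma> \<and> \<gamma> \<le> 1 \<and> 0 \<le> \<eta> \<and> \<eta> < 1 \<and> x 0 \<in> D \<and>
     (\<forall>k. sym_mat (H0 k) \<and> (variant = 1 \<longrightarrow> pd (H0 k)) \<and>
          (\<forall>j \<le> J k. inexact \<eta> g psi D (x k) (trial_H variant \<beta> (H0 k) j) (dt k j)) \<and>
          (\<forall>j < J k. \<not> alg2_accept f g psi D \<gamma> (x k) (trial_H variant \<beta> (H0 k) j) (dt k j)) \<and>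
          alg2_accept f g psi D \<gamma> (x k) (trial_H variant \<beta> (H0 k) (J k)) (dt k (J k)) \<and>
          H k = trial_H variant \<beta> (H0 k) (J k) \<and> d k = dt k (J k) \<and>
          x (Suc k) = x k + d k)"

definition Mt2 :: "real \<Rightarrow> real \<Rightarrow> real \<Rightarrow> real \<Rightarrow> real \<Rightarrow> real \<Rightarrow> real" where
  "Mt2 L \<beta> \<gamma> m0 M0 \<eta> =
     M0 + max 1 ((1 / \<beta>) * (L * (1 + sqrt \<eta>) / (2 - \<gamma> * (1 - sqrt \<eta>)) - m0))"

definition Mt1 :: "real \<Rightarrow> real \<Rightarrow> real \<Rightarrow> real \<Rightarrow> real \<Rightarrow> real \<Rightarrow> real" where
  "Mt1 L \<beta> \<gamma> m0 M0 \<eta> =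
     M0 * max 1 (L * (1 + sqrt \<eta>) / (\<beta> * (2 - \<gamma> * (1 - sqrt \<eta>)) * m0))"

definition is_k0 ::
  "(real^'n \<Rightarrow> real) \<Rightarrow> (real^'n \<Rightarrow> real) \<Rightarrow> (real^'n) set \<Rightarrow> (nat \<Rightarrow> real^'n) \<Rightarrow> real \<Rightarrow> real \<Rightarrow> nat \<Rightarrow> bool" where
  "is_k0 f psi D x M R0 k0 \<longleftrightarrow>
     Fv f psi (x k0) - Fstar f psi D < M * R0\<^sup>2 \<and>
     (\<forall>k < k0. \<not> (Fv f psi (x k) - Fstar f psi D < M * R0\<^sup>2))"

end

theory Submission
  imports Defs
begin

text \<open>Comparing the step with the convex combination \<open>\<lambda> P\<^sub>\<Omega>(x\<^sup>k) + (1 - \<lambda>) x\<^sup>k\<close>,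
  convexity of \<open>f\<close> and \<open>\<psi>\<close> bounds the model value by \<open>-\<lambda> \<delta>\<^sub>k + \<lambda>\<^sup>2/2 W\<^sub>k\<close>, where
  \<open>\<delta>\<^sub>k = F(x\<^sup>k) - F\<^sup>*\<close> and \<open>W\<^sub>k\<close> is the squared \<open>H\<^sub>k\<close>-distance from \<open>x\<^sup>k\<close> to \<open>\<Omega>\<close>.
  Inexactness and the sufficient-decrease test turn this into
  \<open>\<delta>\<^sub>k\<^sub>+\<^sub>1 \<le> \<delta>\<^sub>k + \<gamma> \<alpha>\<^sub>k (1 - \<eta>) (-\<lambda> \<delta>\<^sub>k + \<lambda>\<^sup>2/2 W\<^sub>k)\<close> for every \<open>\<lambda> \<in> [0,1]\<close>,
  and \<open>W\<^sub>k \<le> M R\<^sub>0\<^sup>2\<close>. Taking \<open>\<lambda> = 1\<close> gives the linear rate while \<open>W\<^sub>k \<le> \<delta>\<^sub>k\<close>; taking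
  \<open>\<lambda> = \<delta>\<^sub>k / (M R\<^sub>0\<^sup>2)\<close> gives \<open>1/\<delta>\<^sub>k\<^sub>+\<^sub>1 \<ge> 1/\<delta>\<^sub>k + \<gamma> \<alpha>\<^sub>k (1 - \<eta>)/(2 M R\<^sub>0\<^sup>2)\<close>, the sublinear rate.
  For Algorithm 2 every trial matrix of curvature at least
  \<open>L (1 + \<surd>\<eta>) / (2 - \<gamma> (1 - \<surd>\<eta>))\<close> already passes the acceptance test, which bounds
  the accepted matrices by \<open>M\<^sub>1(\<eta>)\<close> resp. \<open>M\<^sub>2(\<eta>)\<close>.\<close>

section \<open>Smooth convex functions\<close>

lemma has_real_derivative_along_line:
  fixes f :: "'a::real_inner \<Rightarrow> real"
  assumes grad: "\<And>y. (f has_derivative (\<lambda>h. g y \<bullet> h)) (at y)"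
  shows "((\<lambda>t. f (x + t *\<^sub>R v)) has_real_derivative g (x + t *\<^sub>R v) \<bullet> v) (at t)"
proof -
  have "((\<lambda>t. x + t *\<^sub>R v) has_derivative (\<lambda>h. h *\<^sub>R v)) (at t)"
    by (auto intro!: derivative_eq_intros)
  from has_derivative_compose[OF this grad]
  have "((\<lambda>t. f (x + t *\<^sub>R v)) has_derivative (\<lambda>h. g (x + t *\<^sub>R v) \<bullet> (h *\<^sub>R v))) (at t)"
    by (simp add: o_def)
  moreover have "(\<lambda>h. g (x + t *\<^sub>R v) \<bullet> (h *\<^sub>R v)) = (*) (g (x + t *\<^sub>R v) \<bullet> v)"
    by (auto simp: fun_eq_iff)
  ultimately show ?thesis
    unfolding has_field_derivative_def by simp
qed

lemma lipschitz_gradient_upper_bound: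
  fixes f :: "'a::real_inner \<Rightarrow> real"
  assumes grad: "\<And>y. (f has_derivative (\<lambda>h. g y \<bullet> h)) (at y)"
    and lip: "\<And>y z. norm (g y - g z) \<le> L * norm (y - z)"
  shows "f (x + v) \<le> f x + g x \<bullet> v + L / 2 * (norm v)\<^sup>2"
proof -
  define \<phi> where "\<phi> t = f (x + t *\<^sub>R v) - t * (g x \<bullet> v) - L / 2 * t\<^sup>2 * (norm v)\<^sup>2" for t
  have "\<phi> 1 \<le> \<phi> 0"
  proof (rule DERIV_nonpos_imp_nonincreasing[of 0 1 \<phi>])
    fix t :: real assume t: "0 \<le> t" "t \<le> 1"
    have "DERIV \<phi> t :> g (x + t *\<^sub>R v) \<bullet> v - g x \<bullet> v - L * t * (norm v)\<^sup>2"
      unfolding \<phi>_def by (auto intro!: derivative_eq_intros has_real_derivative_along_line[OF grad])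
    moreover have "g (x + t *\<^sub>R v) \<bullet> v - g x \<bullet> v \<le> norm (g (x + t *\<^sub>R v) - g x) * norm v"
      by (metis inner_diff_left norm_cauchy_schwarz)
    moreover have "norm (g (x + t *\<^sub>R v) - g x) * norm v \<le> L * t * norm v * norm v"
      using lip[of "x + t *\<^sub>R v" x] t by (intro mult_right_mono) auto
    ultimately show "\<exists>y. DERIV \<phi> t :> y \<and> y \<le> 0"
      by (intro exI conjI) (auto simp: power2_eq_square)
  qed simp
  then show ?thesis
    unfolding \<phi>_def by simp
qed

lemma convex_on_gradient_lower_bound:
  fixes f :: "'a::real_inner \<Rightarrow> real"
  assumes grad: "\<And>y. (f has_derivative (\<lambda>h. g y \<bullet> h)) (at y)"
    and conv: "convex_on UNIV f"
  shows "f x + g x \<bullet> (y - x) \<le> f y"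
proof -
  define \<phi> where "\<phi> t = f (x + t *\<^sub>R (y - x))" for t
  have "convex_on UNIV \<phi>"
  proof (rule convex_onI)
    fix t a b :: real assume t: "0 < t" "t < 1"
    have "x + ((1 - t) *\<^sub>R a + t *\<^sub>R b) *\<^sub>R (y - x)
        = (1 - t) *\<^sub>R (x + a *\<^sub>R (y - x)) + t *\<^sub>R (x + b *\<^sub>R (y - x))"
      by (simp add: algebra_simps)
    then show "\<phi> ((1 - t) *\<^sub>R a + t *\<^sub>R b) \<le> (1 - t) * \<phi> a + t * \<phi> b"
      unfolding \<phi>_def using t by (auto intro: convex_onD[OF conv])
  qed simp
  moreover have "(\<phi> has_real_derivative g x \<bullet> (y - x)) (at 0)"
    unfolding \<phi>_def using has_real_derivative_along_line[OF grad, of x "y - x" 0] by simp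
  ultimately have "g x \<bullet> (y - x) * (1 - 0) \<le> \<phi> 1 - \<phi> 0"
    by (intro convex_on_imp_above_tangent) auto
  then show ?thesis
    unfolding \<phi>_def by simp
qed

section \<open>Sequences with quadratic model descent\<close>

lemma quadratic_recurrence_reciprocal_step:
  fixes u v c A B :: real
  assumes "0 < A" "0 \<le> u" "0 \<le> v" "0 \<le> c"
    and "u * B \<le> 2 * A" and "v \<le> u - c * u\<^sup>2 / (2 * A)"
  shows "v * (B + c) \<le> 2 * A"
proof (cases "u = 0")
  case True
  with assms show ?thesis by simp
next
  case False
  \<comment> \<open>In reciprocal form: 1/v \<ge> 1/u + c/(2A).\<close>
  have "2 * A * v \<le> 2 * A * u - c * u\<^sup>2"
    using assms by (simp add: field_simps)
  then have "2 * A * v * (2 * A + c * u) \<le> (2 * A * u - c * u\<^sup>2) * (2 * A + c * u)"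
    using assms by (intro mult_right_mono) auto
  also have "\<dots> = 4 * A\<^sup>2 * u - c\<^sup>2 * u ^ 3"
    by (simp add: algebra_simps power2_eq_square power3_eq_cube)
  also have "\<dots> \<le> 4 * A\<^sup>2 * u"
    using assms by simp
  finally have "2 * A * (v * (2 * A + c * u)) \<le> 2 * A * (2 * A * u)"
    by (simp add: power2_eq_square algebra_simps)
  then have "v * (2 * A + c * u) \<le> 2 * A * u"
    using assms by simp
  moreover have "v * (u * B) \<le> v * (2 * A)"
    using assms by (intro mult_left_mono) auto
  ultimately have "u * (v * (B + c)) \<le> u * (2 * A)"
    by (simp add: algebra_simps)
  with False \<open>0 \<le> u\<close> show ?thesis
    by simp
qed

text \<open>\<open>\<delta> k\<close> stands for \<open>F(x\<^sup>k) - F\<^sup>*\<close>, \<open>W k\<close> for the squared \<open>H\<^sub>k\<close>-distance from \<open>x\<^sup>k\<close> to \<open>\<Omega>\<close>,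
  and \<open>A\<close> for its bound \<open>M R\<^sub>0\<^sup>2\<close>.\<close>

locale descent_sequence =
  fixes \<delta> W \<alpha> :: "nat \<Rightarrow> real" and \<gamma> \<eta> A :: real
  assumes gap_nonneg: "\<And>k. 0 \<le> \<delta> k"
    and step_pos: "\<And>k. 0 < \<alpha> k"
    and gamma_pos: "0 < \<gamma>"
    and eta_less_1: "\<eta> < 1"
    and model_descent: "\<And>k l. 0 \<le> l \<Longrightarrow> l \<le> 1 \<Longrightarrow>
        \<delta> (Suc k) \<le> \<delta> k + \<gamma> * \<alpha> k * (1 - \<eta>) * (l * - \<delta> k + l\<^sup>2 / 2 * W k)"
    and W_le: "\<And>k. W k \<le> A"
    and A_pos: "0 < A"
begin

lemma rate_pos: "0 < \<gamma> * \<alpha> k * (1 - \<eta>)"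
  using gamma_pos step_pos eta_less_1 by simp

lemma gap_Suc_le: "\<delta> (Suc k) \<le> \<delta> k"
  using model_descent[of 0 k] by simp

lemma gap_antimono: "k \<le> j \<Longrightarrow> \<delta> j \<le> \<delta> k"
  by (induction j rule: dec_induct) (auto intro: order_trans[OF gap_Suc_le])

lemma linear_rate:
  assumes "W k \<le> \<delta> k"
  shows "\<delta> (Suc k) \<le> (1 - (1 - \<eta>) * \<gamma> * \<alpha> k / 2) * \<delta> k"
proof -
  have "\<delta> (Suc k) \<le> \<delta> k + \<gamma> * \<alpha> k * (1 - \<eta>) * (1 * - \<delta> k + 1\<^sup>2 / 2 * W k)"
    using model_descent[of 1 k] by simp
  also have "\<dots> \<le> \<delta> k + \<gamma> * \<alpha> k * (1 - \<eta>) * (1 * - \<delta> k + 1\<^sup>2 / 2 * \<delta> k)"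
    using assms rate_pos[of k] by (intro add_left_mono mult_left_mono) auto
  also have "\<dots> = (1 - (1 - \<eta>) * \<gamma> * \<alpha> k / 2) * \<delta> k"
    by (simp add: field_simps)
  finally show ?thesis .
qed

lemma quadratic_decrease:
  assumes "\<delta> k < A"
  shows "\<delta> (Suc k) \<le> \<delta> k - \<gamma> * \<alpha> k * (1 - \<eta>) * (\<delta> k)\<^sup>2 / (2 * A)"
proof -
  \<comment> \<open>\<open>l = \<delta> k / A\<close> minimizes the right-hand side of the model descent once \<open>W k\<close> is replaced by \<open>A\<close>.\<close>
  define l where "l = \<delta> k / A"
  have "0 \<le> l" "l \<le> 1"
    unfolding l_def using gap_nonneg[of k] A_pos assms by auto
  then have "\<delta> (Suc k) \<le> \<delta> k + \<gamma> * \<alpha> k * (1 - \<eta>) * (l * - \<delta> k + l\<^sup>2 / 2 * W k)"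
    by (rule model_descent)
  also have "\<dots> \<le> \<delta> k + \<gamma> * \<alpha> k * (1 - \<eta>) * (l * - \<delta> k + l\<^sup>2 / 2 * A)"
    using W_le[of k] rate_pos[of k] by (intro add_left_mono mult_left_mono) auto
  also have "l * - \<delta> k + l\<^sup>2 / 2 * A = - (\<delta> k)\<^sup>2 / (2 * A)"
    unfolding l_def using A_pos by (simp add: field_simps power2_eq_square)
  finally show ?thesis
    by (simp add: algebra_simps)
qed

lemma sublinear_rate:
  assumes "\<delta> k0 < A" "k0 \<le> k"
  shows "\<delta> k \<le> 2 * A / (\<gamma> * (1 - \<eta>) * (\<Sum>t = k0..<k. \<alpha> t) + 2)"
proof -
  have "\<delta> k * (\<gamma> * (1 - \<eta>) * (\<Sum>t = k0..<k. \<alpha> t) + 2) \<le> 2 * A"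
    using \<open>k0 \<le> k\<close>
  proof (induction k rule: dec_induct)
    case base
    then show ?case using assms by simp
  next
    case (step k)
    have "\<delta> k < A"
      using gap_antimono[OF step(1)] assms(1) by simp
    then have "\<delta> (Suc k) * (\<gamma> * (1 - \<eta>) * (\<Sum>t = k0..<k. \<alpha> t) + 2 + \<gamma> * \<alpha> k * (1 - \<eta>)) \<le> 2 * A"
      by (intro quadratic_recurrence_reciprocal_step[OF A_pos gap_nonneg gap_nonneg
            less_imp_le[OF rate_pos] step(3) quadratic_decrease])
    with step(1) show ?case
      by (simp add: algebra_simps)
  qed
  moreover have "0 \<le> \<gamma> * (1 - \<eta>) * (\<Sum>t = k0..<k. \<alpha> t)"
    using gamma_pos eta_less_1 step_pos by (simp add: sum_nonneg less_imp_le)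
  ultimately show ?thesis
    by (simp add: pos_le_divide_eq)
qed

lemma exponential_decay:
  assumes "\<And>j. j < k \<Longrightarrow> A \<le> \<delta> j" and "\<And>j. ab \<le> \<alpha> j"
  shows "\<delta> k \<le> exp (- (\<gamma> * (1 - \<eta>) * ab) * k / 2) * \<delta> 0"
  using assms(1)
proof (induction k)
  case 0
  then show ?case by simp
next
  case (Suc k)
  define c where "c = \<gamma> * (1 - \<eta>) * ab"
  have "\<delta> (Suc k) \<le> (1 - (1 - \<eta>) * \<gamma> * \<alpha> k / 2) * \<delta> k"
    using Suc.prems[of k] W_le[of k] by (intro linear_rate) auto
  also have "\<dots> \<le> exp (- ((1 - \<eta>) * \<gamma> * \<alpha> k / 2)) * \<delta> k"
    using exp_ge_add_one_self[of "- ((1 - \<eta>) * \<gamma> * \<alpha> k / 2)"] gap_nonneg[of k]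
    by (intro mult_right_mono) auto
  also have "\<dots> \<le> exp (- c / 2) * \<delta> k"
    unfolding c_def using assms(2)[of k] gamma_pos eta_less_1 gap_nonneg
    by (intro mult_right_mono) (auto simp: mult_left_mono)
  also have "\<dots> \<le> exp (- c / 2) * (exp (- c * k / 2) * \<delta> 0)"
    using Suc unfolding c_def by (intro mult_left_mono) auto
  also have "\<dots> = exp (- c * Suc k / 2) * \<delta> 0"
  proof -
    have "- c / 2 + - c * k / 2 = - c * Suc k / 2"
      by (simp add: field_simps)
    then show ?thesis
      by (metis exp_add mult.assoc)
  qed
  finally show ?case
    unfolding c_def .
qed

lemma first_index_bound:
  assumes "\<delta> k0 < A" and before: "\<forall>k<k0. \<not> \<delta> k < A" and "0 < ab" "\<forall>k. ab \<le> \<alpha> k"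
  shows "real k0 \<le> max 0 (1 + 2 / (\<gamma> * (1 - \<eta>) * ab) * ln (\<delta> 0 / A))"
proof (cases k0)
  case (Suc m)
  define c where "c = \<gamma> * (1 - \<eta>) * ab"
  have "0 < c"
    unfolding c_def using gamma_pos eta_less_1 \<open>0 < ab\<close> by simp
  have A_le_gap: "A \<le> \<delta> j" if "j \<le> m" for j
    using before Suc that by (simp add: not_less)
  then have "A \<le> \<delta> m"
    by simp
  also have "\<dots> \<le> exp (- c * m / 2) * \<delta> 0"
    unfolding c_def using A_le_gap assms(4) by (intro exponential_decay) auto
  finally have A_le: "A \<le> exp (- c * m / 2) * \<delta> 0" .
  then have "0 < exp (- c * m / 2) * \<delta> 0"
    using A_pos by linarith
  then have "0 < \<delta> 0"
    by (simp add: zero_less_mult_iff)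
  have "ln A \<le> ln (exp (- c * m / 2) * \<delta> 0)"
    using A_le A_pos by simp
  also have "\<dots> = - c * m / 2 + ln (\<delta> 0)"
    using \<open>0 < \<delta> 0\<close> by (simp add: ln_mult)
  finally have "c * m / 2 \<le> ln (\<delta> 0) - ln A"
    by simp
  then have "c * m / 2 \<le> ln (\<delta> 0 / A)"
    using \<open>0 < \<delta> 0\<close> A_pos by (simp add: ln_div)
  then have "real m \<le> 2 / c * ln (\<delta> 0 / A)"
    using \<open>0 < c\<close> by (simp add: field_simps)
  then show ?thesis
    using Suc unfolding c_def by simp
qed simp

end

section \<open>The composite problem and its quadratic model\<close>

lemma quad_form_scaleR: "(c *\<^sub>R v) \<bullet> (H *v (c *\<^sub>R v)) = c\<^sup>2 * (v \<bullet> (H *v v))"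
  for v :: "real^'n"
  by (simp add: matrix_vector_mult_scaleR power2_eq_square)

lemma quad_form_le_mnorm:
  fixes v :: "real^'n"
  assumes "mnorm H \<le> M"
  shows "v \<bullet> (H *v v) \<le> M * (v \<bullet> v)"
proof -
  have "v \<bullet> (H *v v) \<le> norm v * norm (H *v v)"
    by (rule norm_cauchy_schwarz)
  also have "\<dots> \<le> norm v * (mnorm H * norm v)"
    unfolding mnorm_def
    by (intro mult_left_mono onorm[OF matrix_vector_mul_bounded_linear]) auto
  also have "\<dots> = mnorm H * (v \<bullet> v)"
    by (simp add: power2_norm_eq_inner[symmetric] power2_eq_square)
  also have "\<dots> \<le> M * (v \<bullet> v)"
    using assms by (intro mult_right_mono) auto
  finally show ?thesis .
qed

lemma Fstar_le_Fv:
  assumes "assumption1 f g L psi D" "x \<in> D"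
  shows "Fstar f psi D \<le> Fv f psi x"
  using assms unfolding assumption1_def Fstar_def Fv_def by (auto intro: cInf_lower)

lemma closed_Omega:
  assumes A1: "assumption1 f g L psi D"
  shows "closed (Omega f psi D)"
  unfolding closed_sequential_limits
proof (intro allI impI, elim conjE)
  fix xs l assume xs: "\<forall>n. xs n \<in> Omega f psi D" and lim: "xs \<longlonglongrightarrow> l"
  define S where "S = Fstar f psi D"
  have "isCont f l"
    using A1 has_derivative_continuous unfolding assumption1_def by blast
  with lim have "(\<lambda>n. (xs n, S - f (xs n))) \<longlonglongrightarrow> (l, S - f l)"
    by (intro tendsto_intros isCont_tendsto_compose[of l f])
  moreover have "(xs n, S - f (xs n)) \<in> {(x, t). x \<in> D \<and> psi x \<le> t}" for n
    using xs unfolding Omega_def Fv_def S_def by (auto simp: algebra_simps)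
  moreover have "closed {(x, t). x \<in> D \<and> psi x \<le> t}"
    using A1 unfolding assumption1_def by blast
  ultimately have "(l, S - f l) \<in> {(x, t). x \<in> D \<and> psi x \<le> t}"
    by (metis (no_types, lifting) closed_sequentially)
  then have "l \<in> D" "Fv f psi l \<le> S"
    unfolding Fv_def by auto
  with Fstar_le_Fv[OF A1] show "l \<in> Omega f psi D"
    unfolding Omega_def S_def by force
qed

lemma PO_in_Omega:
  assumes "assumption1 f g L psi D" "Omega f psi D \<noteq> {}"
  shows "PO f psi D x \<in> D" "Fv f psi (PO f psi D x) = Fstar f psi D"
  using closest_point_in_set[OF closed_Omega[OF assms(1)] assms(2), of x]
  unfolding PO_def Omega_def by auto

lemma norm_minus_PO_le_level_radius:
  assumes "level_radius f psi D x0 R0" "y \<in> D" "Fv f psi y \<le> Fv f psi x0"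
  shows "norm (y - PO f psi D y) \<le> R0"
  using assms unfolding level_radius_def Let_def by (auto intro!: cSup_upper2)

lemma assumption1D:
  assumes "assumption1 f g L psi D"
  shows "0 < L" "(f has_derivative (\<lambda>h. g y \<bullet> h)) (at y)"
    "norm (g y - g z) \<le> L * norm (y - z)" "convex D" "convex_on D psi"
  using assms unfolding assumption1_def by auto

lemma Qm_zero: "x \<in> D \<Longrightarrow> Qm g psi D x H 0 = 0"
  unfolding Qm_def by (simp add: zero_ereal_def)

lemma Qm_segment_le:
  assumes A1: "assumption1 f g L psi D" and fconv: "convex_on UNIV f"
    and "x \<in> D" "p \<in> D" "0 \<le> l" "l \<le> 1"
  shows "Qm g psi D x H (l *\<^sub>R (p - x))
    \<le> ereal (l * (Fv f psi p - Fv f psi x) + l\<^sup>2 / 2 * ((x - p) \<bullet> (H *v (x - p))))"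
proof -
  have segment: "x + l *\<^sub>R (p - x) = (1 - l) *\<^sub>R x + l *\<^sub>R p"
    by (simp add: algebra_simps)
  have "x + l *\<^sub>R (p - x) \<in> D"
    unfolding segment using assumption1D(4)[OF A1] assms by (intro convexD) auto
  moreover have "psi (x + l *\<^sub>R (p - x)) \<le> (1 - l) * psi x + l * psi p"
    unfolding segment using assumption1D(5)[OF A1] assms by (intro convex_onD) auto
  moreover have "g x \<bullet> (l *\<^sub>R (p - x)) \<le> l * (f p - f x)"
    using convex_on_gradient_lower_bound[OF assumption1D(2)[OF A1] fconv, of x p] assms
    by (simp add: mult_left_mono)
  moreover have "l *\<^sub>R (p - x) = (- l) *\<^sub>R (x - p)"
    by (simp add: algebra_simps)
  then have "(l *\<^sub>R (p - x)) \<bullet> (H *v (l *\<^sub>R (p - x))) = l\<^sup>2 * ((x - p) \<bullet> (H *v (x - p)))"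
    by (simp only: quad_form_scaleR) simp
  ultimately show ?thesis
    unfolding Qm_def Fv_def by (simp add: distrib_left left_diff_distrib right_diff_distrib)
qed

lemma inexact_model_values:
  assumes inx: "inexact \<eta> g psi D x H d" and "\<eta> < 1" "x \<in> D"
  obtains q s where "Qm g psi D x H d = ereal q" "x + d \<in> D" "q \<le> (1 - \<eta>) * s" "s \<le> 0"
    "\<And>e r. Qm g psi D x H e \<le> ereal r \<Longrightarrow> s \<le> r"
proof -
  have lower: "Qstar g psi D x H \<le> Qm g psi D x H e" for e
    unfolding Qstar_def by (rule INF_lower) simp
  show ?thesis
  proof (cases "Qstar g psi D x H")
    case (real s)
    have "Qm g psi D x H d \<le> ereal ((1 - \<eta>) * s)"
      using inx real unfolding inexact_def by simp
    then obtain q where "Qm g psi D x H d = ereal q" "x + d \<in> D" "q \<le> (1 - \<eta>) * s"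
      unfolding Qm_def by (auto split: if_splits)
    moreover have s_le: "s \<le> r" if "Qm g psi D x H e \<le> ereal r" for e r
      using order_trans[OF lower[of e] that] real by simp
    moreover have "s \<le> 0"
      using s_le[of 0 0] Qm_zero[OF \<open>x \<in> D\<close>] by (simp add: zero_ereal_def)
    ultimately show ?thesis
      using that by blast
  next
    case PInf
    then show ?thesis
      using lower[of 0] Qm_zero[OF \<open>x \<in> D\<close>] by simp
  next
    case MInf
    then have "Qm g psi D x H d \<le> - \<infinity>"
      using inx \<open>\<eta> < 1\<close> unfolding inexact_def by simp
    then show ?thesis
      unfolding Qm_def by (simp split: if_splits)
  qed
qed

text \<open>The second conjunct says \<open>\<Delta> \<le> (1 - \<eta>) Q\<^sup>*\<close> without going through extended reals.\<close>

definition sufficient_decrease ::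
  "(real^'n \<Rightarrow> real) \<Rightarrow> (real^'n \<Rightarrow> real^'n) \<Rightarrow> (real^'n \<Rightarrow> real) \<Rightarrow> (real^'n) set \<Rightarrow>
   real \<Rightarrow> real \<Rightarrow> real^'n \<Rightarrow> real^'n^'n \<Rightarrow> real \<Rightarrow> real^'n \<Rightarrow> bool" where
  "sufficient_decrease f g psi D \<gamma> \<eta> x H a y \<longleftrightarrow>
     (\<exists>\<Delta>. Fv f psi y \<le> Fv f psi x + \<gamma> * a * \<Delta> \<and>
          (\<forall>e r. Qm g psi D x H e \<le> ereal r \<longrightarrow> \<Delta> \<le> (1 - \<eta>) * r))"

lemma sufficient_decreaseI:
  assumes inx: "inexact \<eta> g psi D x H d" and "\<eta> < 1" "x \<in> D"
    and "Qm g psi D x H d = ereal q" "\<Delta> \<le> q" "Fv f psi y \<le> Fv f psi x + \<gamma> * a * \<Delta>"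
  shows "sufficient_decrease f g psi D \<gamma> \<eta> x H a y"
  unfolding sufficient_decrease_def
proof (intro exI conjI allI impI)
  obtain q' s where "Qm g psi D x H d = ereal q'" "x + d \<in> D" "q' \<le> (1 - \<eta>) * s" "s \<le> 0"
    and lower: "\<And>e r. Qm g psi D x H e \<le> ereal r \<Longrightarrow> s \<le> r"
    using inexact_model_values[OF inx \<open>\<eta> < 1\<close> \<open>x \<in> D\<close>] by blast
  with \<open>Qm g psi D x H d = ereal q\<close> \<open>\<Delta> \<le> q\<close> have "\<Delta> \<le> (1 - \<eta>) * s"
    by simp
  fix e r
  assume "Qm g psi D x H e \<le> ereal r"
  then have "(1 - \<eta>) * s \<le> (1 - \<eta>) * r"
    using lower \<open>\<eta> < 1\<close> by (intro mult_left_mono) auto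
  with \<open>\<Delta> \<le> (1 - \<eta>) * s\<close> show "\<Delta> \<le> (1 - \<eta>) * r"
    by linarith
qed (fact assms)

lemma sufficient_decrease_model_step:
  assumes A1: "assumption1 f g L psi D" and fconv: "convex_on UNIV f"
    and ne: "Omega f psi D \<noteq> {}" and x: "x \<in> D"
    and dec: "sufficient_decrease f g psi D \<gamma> \<eta> x H a y"
    and "0 \<le> \<gamma> * a" "0 \<le> l" "l \<le> 1"
  shows "Fv f psi y - Fstar f psi D \<le> Fv f psi x - Fstar f psi D + \<gamma> * a * (1 - \<eta>) *
      (l * - (Fv f psi x - Fstar f psi D) + l\<^sup>2 / 2 * ((x - PO f psi D x) \<bullet> (H *v (x - PO f psi D x))))"
proof -
  let ?p = "PO f psi D x"
  obtain \<Delta> where y: "Fv f psi y \<le> Fv f psi x + \<gamma> * a * \<Delta>"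
    and lower: "\<forall>e r. Qm g psi D x H e \<le> ereal r \<longrightarrow> \<Delta> \<le> (1 - \<eta>) * r"
    using dec unfolding sufficient_decrease_def by blast
  have "\<Delta> \<le> (1 - \<eta>) * (l * (Fv f psi ?p - Fv f psi x) + l\<^sup>2 / 2 * ((x - ?p) \<bullet> (H *v (x - ?p))))"
    by (rule lower[rule_format, OF Qm_segment_le[OF A1 fconv x PO_in_Omega(1)[OF A1 ne] \<open>0 \<le> l\<close> \<open>l \<le> 1\<close>]])
  then have "\<gamma> * a * \<Delta> \<le> \<gamma> * a * ((1 - \<eta>) *
      (l * - (Fv f psi x - Fstar f psi D) + l\<^sup>2 / 2 * ((x - ?p) \<bullet> (H *v (x - ?p)))))"
    using \<open>0 \<le> \<gamma> * a\<close> PO_in_Omega(2)[OF A1 ne] by (simp add: mult_left_mono)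
  with y show ?thesis
    by (simp add: mult.assoc)
qed

lemma sufficient_decrease_descent_sequence:
  assumes A1: "assumption1 f g L psi D" and fconv: "convex_on UNIV f"
    and ne: "Omega f psi D \<noteq> {}" and xD: "\<And>k. x k \<in> D"
    and lr: "level_radius f psi D (x 0) R0" and "0 < R0" "0 < M"
    and H_le: "\<And>k v. v \<bullet> (H k *v v) \<le> M * (v \<bullet> v)"
    and dec: "\<And>k. sufficient_decrease f g psi D \<gamma> \<eta> (x k) (H k) (\<alpha> k) (x (Suc k))"
    and \<alpha>_pos: "\<And>k. 0 < \<alpha> k" and "0 < \<gamma>" "\<eta> < 1"
  shows "descent_sequence (\<lambda>k. Fv f psi (x k) - Fstar f psi D)
    (\<lambda>k. (x k - PO f psi D (x k)) \<bullet> (H k *v (x k - PO f psi D (x k)))) \<alpha> \<gamma> \<eta> (M * R0\<^sup>2)"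
proof
  let ?\<delta> = "\<lambda>k. Fv f psi (x k) - Fstar f psi D"
  let ?W = "\<lambda>k. (x k - PO f psi D (x k)) \<bullet> (H k *v (x k - PO f psi D (x k)))"
  show step: "?\<delta> (Suc k) \<le> ?\<delta> k + \<gamma> * \<alpha> k * (1 - \<eta>) * (l * - ?\<delta> k + l\<^sup>2 / 2 * ?W k)"
    if "0 \<le> l" "l \<le> 1" for k l
    using sufficient_decrease_model_step[OF A1 fconv ne xD dec] \<alpha>_pos[of k] \<open>0 < \<gamma>\<close> that
    by simp
  have "Fv f psi (x k) \<le> Fv f psi (x 0)" for k
  proof (induction k)
    case (Suc k)
    then show ?case using step[of 0 k] by simp
  qed simp
  then have dist_le: "norm (x k - PO f psi D (x k)) \<le> R0" for k
    by (rule norm_minus_PO_le_level_radius[OF lr xD])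
  show "?W k \<le> M * R0\<^sup>2" for k
  proof -
    have "?W k \<le> M * (norm (x k - PO f psi D (x k)))\<^sup>2"
      using H_le by (simp add: power2_norm_eq_inner)
    also have "\<dots> \<le> M * R0\<^sup>2"
      using dist_le[of k] \<open>0 < M\<close> by (intro mult_left_mono power_mono) auto
    finally show ?thesis .
  qed
  show "0 \<le> ?\<delta> k" for k
    using Fstar_le_Fv[OF A1 xD] by simp
qed (use assms in auto)

section \<open>Algorithm 1\<close>

lemma armijo_condition_eventually:
  assumes A1: "assumption1 f g L psi D" and "x \<in> D" "x + d \<in> D"
    and \<Delta>_neg: "g x \<bullet> d + psi (x + d) - psi x < 0" and "\<gamma> < 1" "0 < \<beta>" "\<beta> < 1"
  shows "\<exists>i. x + \<beta> ^ i *\<^sub>R d \<in> D \<and>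
    Fv f psi (x + \<beta> ^ i *\<^sub>R d) \<le> Fv f psi x + \<beta> ^ i * \<gamma> * (g x \<bullet> d + psi (x + d) - psi x)"
proof -
  define \<Delta> where "\<Delta> = g x \<bullet> d + psi (x + d) - psi x"
  have "d \<noteq> 0"
    using \<Delta>_neg by auto
  have "0 < 2 * (1 - \<gamma>) * - \<Delta> / (L * (norm d)\<^sup>2)"
    using \<Delta>_neg \<open>\<gamma> < 1\<close> \<open>d \<noteq> 0\<close> assumption1D(1)[OF A1] unfolding \<Delta>_def by simp
  then obtain i where i: "\<beta> ^ i < 2 * (1 - \<gamma>) * - \<Delta> / (L * (norm d)\<^sup>2)"
    using real_arch_pow_inv \<open>\<beta> < 1\<close> by blast
  define a where "a = \<beta> ^ i"
  have "0 < a" "a \<le> 1"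
    unfolding a_def using \<open>0 < \<beta>\<close> \<open>\<beta> < 1\<close> by (auto simp: power_le_one)
  have segment: "x + a *\<^sub>R d = (1 - a) *\<^sub>R x + a *\<^sub>R (x + d)"
    by (simp add: algebra_simps)
  have "x + a *\<^sub>R d \<in> D"
    unfolding segment using assumption1D(4)[OF A1] assms \<open>0 < a\<close> \<open>a \<le> 1\<close>
    by (intro convexD) auto
  moreover have "psi (x + a *\<^sub>R d) \<le> (1 - a) * psi x + a * psi (x + d)"
    unfolding segment using assumption1D(5)[OF A1] assms \<open>0 < a\<close> \<open>a \<le> 1\<close>
    by (intro convex_onD) auto
  moreover have "f (x + a *\<^sub>R d) \<le> f x + a * (g x \<bullet> d) + L / 2 * (a\<^sup>2 * (norm d)\<^sup>2)"
    using lipschitz_gradient_upper_bound[OF assumption1D(2,3)[OF A1], of x "a *\<^sub>R d"]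
    using \<open>0 < a\<close> by (simp add: power_mult_distrib)
  moreover have "L / 2 * (a\<^sup>2 * (norm d)\<^sup>2) \<le> a * (1 - \<gamma>) * - \<Delta>"
  proof -
    have "a * (L * (norm d)\<^sup>2) \<le> 2 * (1 - \<gamma>) * - \<Delta>"
      using i \<open>d \<noteq> 0\<close> assumption1D(1)[OF A1] unfolding a_def by (simp add: field_simps)
    then have "a * (a * (L * (norm d)\<^sup>2)) \<le> a * (2 * (1 - \<gamma>) * - \<Delta>)"
      using \<open>0 < a\<close> by (intro mult_left_mono) auto
    then show ?thesis
      by (simp add: power2_eq_square algebra_simps)
  qed
  ultimately have "Fv f psi (x + a *\<^sub>R d) \<le> Fv f psi x + a * \<gamma> * \<Delta>"
    unfolding Fv_def \<Delta>_def by (simp add: algebra_simps)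
  with \<open>x + a *\<^sub>R d \<in> D\<close> show ?thesis
    unfolding a_def \<Delta>_def by blast
qed

lemma strongly_convex_model_minimizer_zero:
  assumes sc: "Q_strongly_convex g psi D x H" and "x \<in> D" "x + d \<in> D"
    and Qd: "Qm g psi D x H d = 0" and min: "\<And>e r. Qm g psi D x H e \<le> ereal r \<Longrightarrow> 0 \<le> r"
  shows "d = 0"
proof -
  obtain \<mu> where "0 < \<mu>" and scd: "\<And>t. 0 \<le> t \<Longrightarrow> t \<le> 1 \<Longrightarrow>
      Qm g psi D x H (t *\<^sub>R d + (1 - t) *\<^sub>R 0)
        \<le> ereal t * Qm g psi D x H d + ereal (1 - t) * Qm g psi D x H 0
           - ereal (\<mu> / 2 * t * (1 - t) * (norm (d - 0))\<^sup>2)"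
    using sc \<open>x \<in> D\<close> \<open>x + d \<in> D\<close> unfolding Q_strongly_convex_def by (metis add_0_right)
  have "Qm g psi D x H ((1/2) *\<^sub>R d) \<le> ereal (- (\<mu> / 8 * (norm d)\<^sup>2))"
    using scd[of "1/2"] Qd Qm_zero[OF \<open>x \<in> D\<close>] by (simp add: zero_ereal_def)
  then have "\<mu> / 8 * (norm d)\<^sup>2 \<le> 0"
    using min by fastforce
  with \<open>0 < \<mu>\<close> show ?thesis
    by (simp add: mult_le_0_iff)
qed

lemma alg1_step:
  assumes A1: "assumption1 f g L psi D" and run: "alg1_run f g psi D \<beta> \<gamma> \<eta> x H d \<alpha>"
    and "psd (H k)" and xk: "x k \<in> D"
  shows "x (Suc k) \<in> D" "0 < \<alpha> k"
    "sufficient_decrease f g psi D \<gamma> \<eta> (x k) (H k) (\<alpha> k) (x (Suc k))"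
proof -
  have "0 < \<beta>" "\<beta> < 1" "\<gamma> < 1" "\<eta> < 1"
    using run unfolding alg1_run_def by auto
  have sc: "Q_strongly_convex g psi D (x k) (H k)"
    and inx: "inexact \<eta> g psi D (x k) (H k) (d k)"
    and x_Suc: "x (Suc k) = x k + \<alpha> k *\<^sub>R d k"
    using run unfolding alg1_run_def by auto
  define \<Delta> where "\<Delta> = g (x k) \<bullet> d k + psi (x k + d k) - psi (x k)"
  define armijo where "armijo i \<longleftrightarrow> x k + \<beta> ^ i *\<^sub>R d k \<in> D \<and>
      Fv f psi (x k + \<beta> ^ i *\<^sub>R d k) \<le> Fv f psi (x k) + \<beta> ^ i * \<gamma> * \<Delta>" for i
  have \<alpha>_eq: "\<alpha> k = \<beta> ^ (LEAST i. armijo i)"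
    using run unfolding alg1_run_def armijo_def \<Delta>_def Let_def by auto
  obtain q s where Qd: "Qm g psi D (x k) (H k) (d k) = ereal q" and "x k + d k \<in> D"
    and "q \<le> (1 - \<eta>) * s" "s \<le> 0" and lower: "\<And>e r. Qm g psi D (x k) (H k) e \<le> ereal r \<Longrightarrow> s \<le> r"
    using inexact_model_values[OF inx \<open>\<eta> < 1\<close> xk] by blast
  have "0 \<le> d k \<bullet> (H k *v d k)"
    using \<open>psd (H k)\<close> unfolding psd_def by blast
  moreover have "q = \<Delta> + 1 / 2 * (d k \<bullet> (H k *v d k))"
    using Qd \<open>x k + d k \<in> D\<close> unfolding Qm_def \<Delta>_def by simp
  ultimately have "\<Delta> \<le> q"
    by simp
  have "\<exists>i. armijo i"
  proof (cases "\<Delta> < 0")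
    case True
    then show ?thesis
      using armijo_condition_eventually[OF A1 xk \<open>x k + d k \<in> D\<close>] \<open>0 < \<beta>\<close> \<open>\<beta> < 1\<close> \<open>\<gamma> < 1\<close>
      unfolding armijo_def \<Delta>_def by blast
  next
    case False
    \<comment> \<open>Then \<open>q = s = 0\<close>: \<open>d k\<close> attains the model infimum \<open>Q(0) = 0\<close>, so strong convexity forces \<open>d k = 0\<close>.\<close>
    have "(1 - \<eta>) * s \<le> 0"
      using \<open>s \<le> 0\<close> \<open>\<eta> < 1\<close> by (simp add: mult_nonneg_nonpos)
    with False \<open>\<Delta> \<le> q\<close> \<open>q \<le> (1 - \<eta>) * s\<close>
    have "q = 0" "\<Delta> = 0" "(1 - \<eta>) * s = 0"
      by linarith+
    then have "s = 0"
      using \<open>\<eta> < 1\<close> by simp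
    then have "d k = 0"
      using strongly_convex_model_minimizer_zero[OF sc xk \<open>x k + d k \<in> D\<close>] Qd \<open>q = 0\<close> lower
      by (simp add: zero_ereal_def)
    then have "armijo 0"
      unfolding armijo_def using xk \<open>\<Delta> = 0\<close> by simp
    then show ?thesis ..
  qed
  then have "armijo (LEAST i. armijo i)"
    by (rule LeastI_ex)
  then have "x (Suc k) \<in> D" "Fv f psi (x (Suc k)) \<le> Fv f psi (x k) + \<gamma> * \<alpha> k * \<Delta>"
    unfolding x_Suc \<alpha>_eq armijo_def by (simp_all add: algebra_simps)
  then show "x (Suc k) \<in> D"
    and "sufficient_decrease f g psi D \<gamma> \<eta> (x k) (H k) (\<alpha> k) (x (Suc k))"
    using sufficient_decreaseI[OF inx \<open>\<eta> < 1\<close> xk Qd \<open>\<Delta> \<le> q\<close>] by auto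
  show "0 < \<alpha> k"
    unfolding \<alpha>_eq using \<open>0 < \<beta>\<close> by simp
qed

lemma alg1_descent_sequence:
  assumes A1: "assumption1 f g L psi D" and fconv: "convex_on UNIV f"
    and ne: "Omega f psi D \<noteq> {}" and run: "alg1_run f g psi D \<beta> \<gamma> \<eta> x H d \<alpha>"
    and lr: "level_radius f psi D (x 0) R0" and "0 < R0" "0 < M"
    and H_le: "\<And>k. mnorm (H k) \<le> M" and psd: "\<And>k. psd (H k)"
  shows "descent_sequence (\<lambda>k. Fv f psi (x k) - Fstar f psi D)
    (\<lambda>k. (x k - PO f psi D (x k)) \<bullet> (H k *v (x k - PO f psi D (x k)))) \<alpha> \<gamma> \<eta> (M * R0\<^sup>2)"
proof -
  have xD: "x k \<in> D" for k
  proof (induction k)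
    case 0
    then show ?case using run unfolding alg1_run_def by simp
  next
    case (Suc k)
    then show ?case using alg1_step(1)[OF A1 run psd] by blast
  qed
  show ?thesis
    using run unfolding alg1_run_def
    by (intro sufficient_decrease_descent_sequence[where x = x, OF A1 fconv ne xD lr \<open>0 < R0\<close>
          \<open>0 < M\<close> quad_form_le_mnorm[OF H_le] alg1_step(3,2)[OF A1 run psd xD]]) auto
qed

lemma alg1_convergence:
  assumes A1: "assumption1 f g L psi D" and fconv: "convex_on UNIV f"
    and ne: "Omega f psi D \<noteq> {}" and run: "alg1_run f g psi D \<beta> \<gamma> \<eta> x H d \<alpha>"
    and lr: "level_radius f psi D (x 0) R0" and "R0 > 0" "M > 0"
    and "\<forall>k. mnorm (H k) \<le> M" "\<forall>k. psd (H k)"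
  shows "(\<forall>k. (x k - PO f psi D (x k)) \<bullet> (H k *v (x k - PO f psi D (x k)))
              \<le> Fv f psi (x k) - Fstar f psi D
           \<longrightarrow> Fv f psi (x (Suc k)) - Fstar f psi D
                 \<le> (1 - (1 - \<eta>) * \<gamma> * \<alpha> k / 2) * (Fv f psi (x k) - Fstar f psi D)) \<and>
      (\<forall>k0. is_k0 f psi D x M R0 k0 \<longrightarrow>
         (\<forall>k \<ge> k0. Fv f psi (x k) - Fstar f psi D
                     \<le> 2 * M * R0\<^sup>2 / (\<gamma> * (1 - \<eta>) * (\<Sum>t = k0..<k. \<alpha> t) + 2)) \<and>
         (\<forall>\<alpha>b > 0. (\<forall>k. \<alpha>b \<le> \<alpha> k) \<longrightarrow>
            real k0 \<le> max 0 (1 + 2 / (\<gamma> * (1 - \<eta>) * \<alpha>b)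
                                  * ln ((Fv f psi (x 0) - Fstar f psi D) / (M * R0\<^sup>2)))))"
proof -
  interpret descent_sequence "\<lambda>k. Fv f psi (x k) - Fstar f psi D"
    "\<lambda>k. (x k - PO f psi D (x k)) \<bullet> (H k *v (x k - PO f psi D (x k)))" \<alpha> \<gamma> \<eta> "M * R0\<^sup>2"
    using assms by (intro alg1_descent_sequence) auto
  show ?thesis
    using linear_rate sublinear_rate first_index_bound unfolding is_k0_def
    by (auto simp: mult.assoc)
qed

section \<open>Algorithm 2\<close>

lemma segment_gap_bound:
  fixes \<mu> n2 p :: real
  assumes seg: "\<And>t. 0 \<le> t \<Longrightarrow> t \<le> 1 \<Longrightarrow> - p \<le> - t * p - \<mu> / 2 * t * (1 - t) * n2"
    and "0 < \<mu>" "0 \<le> p"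
  shows "\<mu> * n2 \<le> 2 * p"
proof (rule ccontr)
  assume "\<not> \<mu> * n2 \<le> 2 * p"
  then have big: "2 * p < \<mu> * n2" and "0 < \<mu> * n2"
    using \<open>0 \<le> p\<close> by auto
  define t where "t = (2 * p / (\<mu> * n2) + 1) / 2"
  have "2 * p / (\<mu> * n2) < 1" "0 \<le> 2 * p / (\<mu> * n2)"
    using big \<open>0 < \<mu> * n2\<close> \<open>0 \<le> p\<close> by (simp_all add: field_simps)
  then have "0 \<le> t" "t < 1" "2 * p / (\<mu> * n2) < t"
    unfolding t_def by auto
  then have "p < \<mu> / 2 * t * n2"
    using \<open>0 < \<mu> * n2\<close> by (simp add: field_simps)
  moreover have "(1 - t) * (\<mu> / 2 * t * n2) \<le> (1 - t) * p"
    using seg[OF \<open>0 \<le> t\<close> less_imp_le[OF \<open>t < 1\<close>]] by (simp add: algebra_simps)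
  ultimately show False
    using \<open>t < 1\<close> by simp
qed

lemma segment_gap_bound_inexact:
  fixes \<mu> n2 p r s :: real
  assumes seg: "\<And>t. 0 \<le> t \<Longrightarrow> t \<le> 1 \<Longrightarrow> s \<le> - t * p - \<mu> / 2 * t * (1 - t) * n2"
    and "- p \<le> (1 - r\<^sup>2) * s" and "0 < r" "r < 1"
  shows "\<mu> * n2 * (1 - r) \<le> 2 * p * (1 + r)"
proof -
  define t where "t = 1 / (1 + r)"
  have "0 \<le> t" "t \<le> 1"
    unfolding t_def using \<open>0 < r\<close> by auto
  have "0 \<le> 1 - r\<^sup>2"
    using \<open>0 < r\<close> \<open>r < 1\<close> by (simp add: power_le_one)
  then have "- p \<le> (1 - r\<^sup>2) * (- t * p - \<mu> / 2 * t * (1 - t) * n2)"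
    using assms(2) seg[OF \<open>0 \<le> t\<close> \<open>t \<le> 1\<close>] by (meson mult_left_mono order_trans)
  also have "\<dots> = - ((1 - r\<^sup>2) * t) * p - \<mu> / 2 * ((1 - r\<^sup>2) * (t * (1 - t))) * n2"
    by (simp add: field_simps)
  also have "(1 - r\<^sup>2) * t = 1 - r"
    unfolding t_def using \<open>0 < r\<close> by (simp add: field_simps power2_eq_square)
  also have "(1 - r\<^sup>2) * (t * (1 - t)) = r * (1 - r) / (1 + r)"
  proof -
    have "1 - t = r / (1 + r)" "1 - r\<^sup>2 = (1 - r) * (1 + r)"
      unfolding t_def using \<open>0 < r\<close> by (simp_all add: field_simps power2_eq_square)
    then show ?thesis
      unfolding t_def using \<open>0 < r\<close> by simp
  qed
  finally have "r * (\<mu> * n2 * (1 - r)) \<le> r * (2 * p * (1 + r))"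
    using \<open>0 < r\<close> by (simp add: field_simps)
  then show ?thesis
    using \<open>0 < r\<close> by simp
qed

lemma Qm_scaleR_le:
  assumes A1: "assumption1 f g L psi D" and "x \<in> D" "x + d \<in> D"
    and H_ge: "\<And>v. \<mu> * (v \<bullet> v) \<le> v \<bullet> (H *v v)"
    and Qd: "Qm g psi D x H d = ereal q" and "0 \<le> t" "t \<le> 1"
  shows "Qm g psi D x H (t *\<^sub>R d) \<le> ereal (t * q - \<mu> / 2 * t * (1 - t) * (d \<bullet> d))"
proof -
  have segment: "x + t *\<^sub>R d = (1 - t) *\<^sub>R x + t *\<^sub>R (x + d)"
    by (simp add: algebra_simps)
  have "x + t *\<^sub>R d \<in> D"
    unfolding segment using assumption1D(4)[OF A1] assms by (intro convexD) auto
  moreover have "psi (x + t *\<^sub>R d) \<le> (1 - t) * psi x + t * psi (x + d)"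
    unfolding segment using assumption1D(5)[OF A1] assms by (intro convex_onD) auto
  moreover have "0 \<le> t * (1 - t) * (d \<bullet> (H *v d) - \<mu> * (d \<bullet> d))"
    using H_ge[of d] \<open>0 \<le> t\<close> \<open>t \<le> 1\<close> by simp
  moreover have q: "q = g x \<bullet> d + 1 / 2 * (d \<bullet> (H *v d)) + psi (x + d) - psi x"
    using Qd \<open>x + d \<in> D\<close> unfolding Qm_def by simp
  moreover have "t * q - \<mu> / 2 * t * (1 - t) * (d \<bullet> d)
      - (t * (g x \<bullet> d) + 1 / 2 * (t\<^sup>2 * (d \<bullet> (H *v d))) + psi (x + t *\<^sub>R d) - psi x)
    = ((1 - t) * psi x + t * psi (x + d) - psi (x + t *\<^sub>R d))
      + t * (1 - t) * (d \<bullet> (H *v d) - \<mu> * (d \<bullet> d)) / 2"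
    unfolding q by (simp add: field_simps power2_eq_square)
  ultimately show ?thesis
    unfolding Qm_def quad_form_scaleR by simp
qed

lemma inexact_curvature_bound:
  assumes A1: "assumption1 f g L psi D" and "x \<in> D"
    and H_ge: "\<And>v. \<mu> * (v \<bullet> v) \<le> v \<bullet> (H *v v)" and "0 < \<mu>"
    and inx: "inexact \<eta> g psi D x H d" and "0 \<le> \<eta>" "\<eta> < 1"
    and Qd: "Qm g psi D x H d = ereal q"
  shows "0 \<le> - q" "\<mu> * (d \<bullet> d) * (1 - sqrt \<eta>) \<le> 2 * - q * (1 + sqrt \<eta>)"
proof -
  obtain q' s where "Qm g psi D x H d = ereal q'" "x + d \<in> D" "q' \<le> (1 - \<eta>) * s" "s \<le> 0"
    and lower: "\<And>e r. Qm g psi D x H e \<le> ereal r \<Longrightarrow> s \<le> r"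
    using inexact_model_values[OF inx \<open>\<eta> < 1\<close> \<open>x \<in> D\<close>] by blast
  with Qd have "q \<le> (1 - \<eta>) * s"
    by simp
  have seg: "s \<le> t * q - \<mu> / 2 * t * (1 - t) * (d \<bullet> d)" if "0 \<le> t" "t \<le> 1" for t
    using lower Qm_scaleR_le[OF A1 \<open>x \<in> D\<close> \<open>x + d \<in> D\<close> H_ge Qd that] by blast
  have "(1 - \<eta>) * s \<le> 0"
    using \<open>s \<le> 0\<close> \<open>\<eta> < 1\<close> by (simp add: mult_nonneg_nonpos)
  with \<open>q \<le> (1 - \<eta>) * s\<close> show "0 \<le> - q"
    by linarith
  show "\<mu> * (d \<bullet> d) * (1 - sqrt \<eta>) \<le> 2 * - q * (1 + sqrt \<eta>)"
  proof (cases "\<eta> = 0")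
    case True
    have "- (- q) \<le> - t * - q - \<mu> / 2 * t * (1 - t) * (d \<bullet> d)" if "0 \<le> t" "t \<le> 1" for t
      using seg[OF that] \<open>q \<le> (1 - \<eta>) * s\<close> True by simp
    then have "\<mu> * (d \<bullet> d) \<le> 2 * - q"
      by (rule segment_gap_bound[OF _ \<open>0 < \<mu>\<close> \<open>0 \<le> - q\<close>])
    with True show ?thesis
      by simp
  next
    case False
    have "- (- q) \<le> (1 - (sqrt \<eta>)\<^sup>2) * s"
      using \<open>q \<le> (1 - \<eta>) * s\<close> \<open>0 \<le> \<eta>\<close> by simp
    with False seg \<open>0 \<le> \<eta>\<close> \<open>\<eta> < 1\<close> show ?thesis
      by (intro segment_gap_bound_inexact) auto
  qed
qed

definition accept_curvature :: "real \<Rightarrow> real \<Rightarrow> real \<Rightarrow> real" where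
  "accept_curvature L \<gamma> \<eta> = L * (1 + sqrt \<eta>) / (2 - \<gamma> * (1 - sqrt \<eta>))"

lemma accept_curvature_denominator_pos:
  assumes "\<gamma> \<le> 1" "0 \<le> \<eta>" "\<eta> < 1"
  shows "0 < 2 - \<gamma> * (1 - sqrt \<eta>)"
proof -
  have "0 \<le> 1 - sqrt \<eta>" "1 - sqrt \<eta> \<le> 1"
    using assms by auto
  then have "\<gamma> * (1 - sqrt \<eta>) \<le> 1"
    using \<open>\<gamma> \<le> 1\<close> by (cases "0 \<le> \<gamma>") (auto simp: mult_le_one mult_nonpos_nonneg)
  then show ?thesis
    by simp
qed

lemma accept_curvature_pos:
  assumes "0 < L" "\<gamma> \<le> 1" "0 \<le> \<eta>" "\<eta> < 1"
  shows "0 < accept_curvature L \<gamma> \<eta>"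
  unfolding accept_curvature_def using assms accept_curvature_denominator_pos[of \<gamma> \<eta>]
  by (intro divide_pos_pos mult_pos_pos add_pos_nonneg) auto

lemma alg2_accept_of_curvature:
  assumes A1: "assumption1 f g L psi D" and "x \<in> D" "0 \<le> \<eta>" "\<eta> < 1" "0 < \<gamma>" "\<gamma> \<le> 1"
    and H_ge: "\<And>v. \<mu> * (v \<bullet> v) \<le> v \<bullet> (H *v v)"
    and \<mu>: "accept_curvature L \<gamma> \<eta> \<le> \<mu>"
    and inx: "inexact \<eta> g psi D x H d"
  shows "alg2_accept f g psi D \<gamma> x H d"
proof -
  obtain q s where Qd: "Qm g psi D x H d = ereal q" and "x + d \<in> D" "q \<le> (1 - \<eta>) * s"
    "s \<le> 0" "\<And>e r. Qm g psi D x H e \<le> ereal r \<Longrightarrow> s \<le> r"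
    using inexact_model_values[OF inx \<open>\<eta> < 1\<close> \<open>x \<in> D\<close>] by blast
  define r where "r = sqrt \<eta>"
  have "0 \<le> r" "r < 1"
    unfolding r_def using assms by auto
  have "0 < \<mu>"
    using accept_curvature_pos[OF assumption1D(1)[OF A1] \<open>\<gamma> \<le> 1\<close> \<open>0 \<le> \<eta>\<close> \<open>\<eta> < 1\<close>] \<mu>
    by linarith
  note bound = inexact_curvature_bound[OF A1 \<open>x \<in> D\<close> H_ge \<open>0 < \<mu>\<close> inx \<open>0 \<le> \<eta>\<close> \<open>\<eta> < 1\<close> Qd,
      folded r_def]
  have q: "q = g x \<bullet> d + 1 / 2 * (d \<bullet> (H *v d)) + psi (x + d) - psi x"
    using Qd \<open>x + d \<in> D\<close> unfolding Qm_def by simp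
  \<comment> \<open>The curvature excess of \<open>f\<close> over the model is paid for by the \<open>(1 - \<gamma>)\<close> part of the model decrease.\<close>
  have excess: "L * (d \<bullet> d) - d \<bullet> (H *v d) \<le> 2 * (1 - \<gamma>) * - q"
  proof (cases "L \<le> \<mu>")
    case True
    then have "L * (d \<bullet> d) \<le> \<mu> * (d \<bullet> d)"
      by (intro mult_right_mono) auto
    moreover have "0 \<le> 2 * (1 - \<gamma>) * - q"
      using \<open>\<gamma> \<le> 1\<close> bound(1) by (intro mult_nonneg_nonneg) auto
    ultimately show ?thesis
      using H_ge[of d] by linarith
  next
    case False
    have "L * (1 + r) \<le> \<mu> * (2 - \<gamma> * (1 - r))"
      using \<mu> accept_curvature_denominator_pos[of \<gamma> \<eta>] assms
      unfolding accept_curvature_def r_def by (simp add: pos_divide_le_eq)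
    then have "(L - \<mu>) * (1 + r) \<le> \<mu> * (1 - \<gamma>) * (1 - r)"
      by (simp add: algebra_simps)
    have "(\<mu> * (1 - r)) * ((L - \<mu>) * (d \<bullet> d)) = (L - \<mu>) * (\<mu> * (d \<bullet> d) * (1 - r))"
      by (simp add: algebra_simps)
    also have "\<dots> \<le> (L - \<mu>) * (2 * - q * (1 + r))"
      using bound(2) False by (intro mult_left_mono) auto
    also have "\<dots> = 2 * - q * ((L - \<mu>) * (1 + r))"
      by (simp add: algebra_simps)
    also have "\<dots> \<le> 2 * - q * (\<mu> * (1 - \<gamma>) * (1 - r))"
      using \<open>(L - \<mu>) * (1 + r) \<le> \<mu> * (1 - \<gamma>) * (1 - r)\<close> bound(1) by (intro mult_left_mono) auto
    also have "\<dots> = (\<mu> * (1 - r)) * (2 * (1 - \<gamma>) * - q)"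
      by (simp add: algebra_simps)
    finally have "(L - \<mu>) * (d \<bullet> d) \<le> 2 * (1 - \<gamma>) * - q"
      by (rule mult_left_le_imp_le) (use \<open>0 < \<mu>\<close> \<open>r < 1\<close> in simp)
    then show ?thesis
      using H_ge[of d] by (simp add: algebra_simps)
  qed
  have "f (x + d) \<le> f x + g x \<bullet> d + L / 2 * (d \<bullet> d)"
    using lipschitz_gradient_upper_bound[OF assumption1D(2,3)[OF A1], of x d]
    by (simp add: power2_norm_eq_inner)
  moreover have "L * (d \<bullet> d) - d \<bullet> (H *v d) \<le> 2 * (\<gamma> * q) - 2 * q"
    using excess by (simp add: algebra_simps)
  ultimately have "Fv f psi (x + d) \<le> Fv f psi x + \<gamma> * q"
    using q unfolding Fv_def by linarith
  moreover have "\<gamma> * q \<le> 0"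
    using bound(1) \<open>0 < \<gamma>\<close> by (simp add: mult_nonneg_nonpos)
  ultimately show ?thesis
    unfolding alg2_accept_def Qd by simp
qed

lemma alg2_rejected_trial_curvature:
  assumes A1: "assumption1 f g L psi D"
    and run: "alg2_run variant f g psi D \<beta> \<gamma> \<eta> m0 M0 x H0 dt J H d" and "x k \<in> D"
    and "j < J k" and H_ge: "\<And>v. \<mu> * (v \<bullet> v) \<le> v \<bullet> (trial_H variant \<beta> (H0 k) j *v v)"
  shows "\<mu> < accept_curvature L \<gamma> \<eta>"
proof (rule ccontr)
  assume "\<not> \<mu> < accept_curvature L \<gamma> \<eta>"
  with run assms have "alg2_accept f g psi D \<gamma> (x k) (trial_H variant \<beta> (H0 k) j) (dt k j)"
    unfolding alg2_run_def
    by (intro alg2_accept_of_curvature[OF A1 \<open>x k \<in> D\<close> _ _ _ _ H_ge]) auto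
  with run \<open>j < J k\<close> show False
    unfolding alg2_run_def by blast
qed

lemma trial_H_variant1_quad: "w \<bullet> (trial_H 1 \<beta> H0 j *v w) = w \<bullet> (H0 *v w) / \<beta> ^ j"
  unfolding trial_H_def by (simp add: scaleR_matrix_vector_assoc[symmetric])

lemma trial_H_variant2_quad:
  "w \<bullet> (trial_H 2 \<beta> H0 (Suc j) *v w) = w \<bullet> (H0 *v w) + (w \<bullet> w) / \<beta> ^ j"
  unfolding trial_H_def
  by (simp add: scaleR_matrix_vector_assoc[symmetric] matrix_vector_mult_add_rdistrib inner_add_right)

lemma alg2_variant1_H_le:
  assumes A1: "assumption1 f g L psi D"
    and run: "alg2_run 1 f g psi D \<beta> \<gamma> \<eta> m0 M0 x H0 dt J H d" and "x k \<in> D"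
    and "0 < M0" "0 < m0" and H0: "loewner_between m0 (H0 k) M0"
  shows "v \<bullet> (H k *v v) \<le> Mt1 L \<beta> \<gamma> m0 M0 \<eta> * (v \<bullet> v)"
proof -
  have "0 < \<beta>" and H: "H k = trial_H 1 \<beta> (H0 k) (J k)"
    using run unfolding alg2_run_def by auto
  define Q where "Q = accept_curvature L \<gamma> \<eta> / (\<beta> * m0)"
  have Mt1: "Mt1 L \<beta> \<gamma> m0 M0 \<eta> = M0 * max 1 Q"
    unfolding Mt1_def Q_def accept_curvature_def by (simp add: ac_simps)
  have "1 / \<beta> ^ J k \<le> max 1 Q"
  proof (cases "J k")
    case (Suc j)
    have "m0 / \<beta> ^ j * (w \<bullet> w) \<le> w \<bullet> (trial_H 1 \<beta> (H0 k) j *v w)" for w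
      using H0 \<open>0 < \<beta>\<close> unfolding trial_H_variant1_quad loewner_between_def
      by (simp add: divide_right_mono)
    then have "m0 / \<beta> ^ j < accept_curvature L \<gamma> \<eta>"
      using Suc by (intro alg2_rejected_trial_curvature[OF A1 run \<open>x k \<in> D\<close>, where j = j]) auto
    then have "1 / \<beta> ^ J k \<le> Q"
      unfolding Suc Q_def using \<open>0 < \<beta>\<close> \<open>0 < m0\<close> by (simp add: field_simps)
    then show ?thesis
      by simp
  qed simp
  have "v \<bullet> (H k *v v) = 1 / \<beta> ^ J k * (v \<bullet> (H0 k *v v))"
    unfolding H trial_H_variant1_quad by simp
  also have "\<dots> \<le> max 1 Q * (M0 * (v \<bullet> v))"
  proof (rule mult_mono)
    show "v \<bullet> (H0 k *v v) \<le> M0 * (v \<bullet> v)" "0 \<le> v \<bullet> (H0 k *v v)"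
      using H0 \<open>0 < m0\<close> unfolding loewner_between_def
      by (auto intro: order_trans[OF mult_nonneg_nonneg[of m0 "v \<bullet> v"]])
  qed (use \<open>1 / \<beta> ^ J k \<le> max 1 Q\<close> in auto)
  finally show ?thesis
    unfolding Mt1 by (simp add: algebra_simps)
qed

lemma alg2_variant2_H_le:
  assumes A1: "assumption1 f g L psi D"
    and run: "alg2_run 2 f g psi D \<beta> \<gamma> \<eta> m0 M0 x H0 dt J H d" and "x k \<in> D"
    and H0: "loewner_between m0 (H0 k) M0"
  shows "v \<bullet> (H k *v v) \<le> Mt2 L \<beta> \<gamma> m0 M0 \<eta> * (v \<bullet> v)"
proof -
  have "0 < \<beta>" and H: "H k = trial_H 2 \<beta> (H0 k) (J k)"
    using run unfolding alg2_run_def by auto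
  define Q where "Q = (accept_curvature L \<gamma> \<eta> - m0) / \<beta>"
  have Mt2: "Mt2 L \<beta> \<gamma> m0 M0 \<eta> = M0 + max 1 Q"
    unfolding Mt2_def Q_def accept_curvature_def by simp
  have "v \<bullet> (H k *v v) \<le> (M0 + max 1 Q) * (v \<bullet> v)"
  proof (cases "J k")
    case 0
    then have "v \<bullet> (H k *v v) \<le> M0 * (v \<bullet> v)"
      using H0 unfolding H trial_H_def loewner_between_def by simp
    also have "\<dots> \<le> (M0 + max 1 Q) * (v \<bullet> v)"
      by (intro mult_right_mono) auto
    finally show ?thesis .
  next
    case (Suc j)
    have "(v \<bullet> v) / \<beta> ^ j \<le> max 1 Q * (v \<bullet> v)"
    proof (cases j)
      case (Suc i)
      have "(m0 + 1 / \<beta> ^ i) * (w \<bullet> w) \<le> w \<bullet> (trial_H 2 \<beta> (H0 k) j *v w)" for w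
        using H0 unfolding Suc trial_H_variant2_quad loewner_between_def
        by (simp add: algebra_simps)
      then have "m0 + 1 / \<beta> ^ i < accept_curvature L \<gamma> \<eta>"
        using \<open>J k = Suc j\<close> Suc by (intro alg2_rejected_trial_curvature[OF A1 run \<open>x k \<in> D\<close>, where j = j]) auto
      then have "1 / \<beta> ^ j \<le> Q"
        unfolding Suc Q_def using \<open>0 < \<beta>\<close> by (simp add: field_simps)
      then have "1 / \<beta> ^ j \<le> max 1 Q"
        by simp
      then show ?thesis
        using mult_right_mono[of "1 / \<beta> ^ j" "max 1 Q" "v \<bullet> v"] by simp
    qed (use mult_right_mono[of 1 "max 1 Q" "v \<bullet> v"] in simp)
    then show ?thesis
      using H0 unfolding H Suc trial_H_variant2_quad loewner_between_def
      by (simp add: algebra_simps add_mono)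
  qed
  then show ?thesis
    unfolding Mt2 .
qed

lemma alg2_step:
  assumes run: "alg2_run variant f g psi D \<beta> \<gamma> \<eta> m0 M0 x H0 dt J H d" and xk: "x k \<in> D"
  shows "x (Suc k) \<in> D" "sufficient_decrease f g psi D \<gamma> \<eta> (x k) (H k) 1 (x (Suc k))"
proof -
  have inx: "inexact \<eta> g psi D (x k) (H k) (d k)"
    and acc: "alg2_accept f g psi D \<gamma> (x k) (H k) (d k)"
    and x_Suc: "x (Suc k) = x k + d k" and "\<eta> < 1"
    using run unfolding alg2_run_def by auto
  obtain q s where Qd: "Qm g psi D (x k) (H k) (d k) = ereal q" and "x k + d k \<in> D"
    "q \<le> (1 - \<eta>) * s" "s \<le> 0" "\<And>e r. Qm g psi D (x k) (H k) e \<le> ereal r \<Longrightarrow> s \<le> r"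
    using inexact_model_values[OF inx \<open>\<eta> < 1\<close> xk] by blast
  show "x (Suc k) \<in> D"
    unfolding x_Suc by fact
  have "Fv f psi (x (Suc k)) \<le> Fv f psi (x k) + \<gamma> * 1 * q"
    using acc unfolding alg2_accept_def Qd x_Suc by simp
  then show "sufficient_decrease f g psi D \<gamma> \<eta> (x k) (H k) 1 (x (Suc k))"
    by (rule sufficient_decreaseI[OF inx \<open>\<eta> < 1\<close> xk Qd order_refl])
qed

lemma alg2_descent_sequence:
  assumes A1: "assumption1 f g L psi D" and fconv: "convex_on UNIV f"
    and ne: "Omega f psi D \<noteq> {}"
    and run: "alg2_run variant f g psi D \<beta> \<gamma> \<eta> m0 M0 x H0 dt J H d"
    and lr: "level_radius f psi D (x 0) R0" and "0 < R0" "0 < M0" "variant = 1 \<longrightarrow> 0 < m0"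
    and H0: "\<And>k. loewner_between m0 (H0 k) M0"
    and Mt: "Mt = (if variant = 1 then Mt1 L \<beta> \<gamma> m0 M0 \<eta> else Mt2 L \<beta> \<gamma> m0 M0 \<eta>)"
  shows "descent_sequence (\<lambda>k. Fv f psi (x k) - Fstar f psi D)
    (\<lambda>k. (x k - PO f psi D (x k)) \<bullet> (H k *v (x k - PO f psi D (x k)))) (\<lambda>k. 1) \<gamma> \<eta> (Mt * R0\<^sup>2)"
proof -
  have variant: "variant = 1 \<or> variant = 2" and "0 < \<gamma>" "\<eta> < 1"
    using run unfolding alg2_run_def by auto
  have xD: "x k \<in> D" for k
  proof (induction k)
    case 0
    then show ?case using run unfolding alg2_run_def by simp
  next
    case (Suc k)
    then show ?case using alg2_step(1)[OF run] by blast
  qed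
  have "v \<bullet> (H k *v v) \<le> Mt * (v \<bullet> v)" for k v
    using variant alg2_variant1_H_le[OF A1 _ xD \<open>0 < M0\<close> _ H0] alg2_variant2_H_le[OF A1 _ xD H0]
      run \<open>variant = 1 \<longrightarrow> 0 < m0\<close> unfolding Mt by auto
  moreover have "0 < Mt"
    unfolding Mt Mt1_def Mt2_def using \<open>0 < M0\<close> by (auto intro!: mult_pos_pos simp: less_max_iff_disj)
  ultimately show ?thesis
    using \<open>0 < \<gamma>\<close> \<open>\<eta> < 1\<close>
    by (intro sufficient_decrease_descent_sequence[where x = x, OF A1 fconv ne xD lr \<open>0 < R0\<close>
          \<open>0 < Mt\<close> _ alg2_step(2)[OF run xD]]) auto
qed

lemma alg2_convergence:
  assumes A1: "assumption1 f g L psi D" and fconv: "convex_on UNIV f"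
    and ne: "Omega f psi D \<noteq> {}"
    and run: "alg2_run variant f g psi D \<beta> \<gamma> \<eta> m0 M0 x H0 dt J H d"
    and lr: "level_radius f psi D (x 0) R0" and "R0 > 0" "M0 > 0" "variant = 1 \<longrightarrow> m0 > 0"
    and "\<forall>k. loewner_between m0 (H0 k) M0"
    and Mt: "Mt = (if variant = 1 then Mt1 L \<beta> \<gamma> m0 M0 \<eta> else Mt2 L \<beta> \<gamma> m0 M0 \<eta>)"
  shows "(\<forall>k. (x k - PO f psi D (x k)) \<bullet> (H k *v (x k - PO f psi D (x k)))
              \<le> Fv f psi (x k) - Fstar f psi D
           \<longrightarrow> Fv f psi (x (Suc k)) - Fstar f psi D
                 \<le> (1 - (1 - \<eta>) * \<gamma> / 2) * (Fv f psi (x k) - Fstar f psi D)) \<and>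
      (\<forall>k0. is_k0 f psi D x Mt R0 k0 \<longrightarrow>
         (\<forall>k \<ge> k0. Fv f psi (x k) - Fstar f psi D
                     \<le> 2 * Mt * R0\<^sup>2 / (\<gamma> * (1 - \<eta>) * real (k - k0) + 2)) \<and>
         real k0 \<le> max 0 (1 + 2 / (\<gamma> * (1 - \<eta>))
                               * ln ((Fv f psi (x 0) - Fstar f psi D) / (Mt * R0\<^sup>2))))"
proof -
  interpret descent_sequence "\<lambda>k. Fv f psi (x k) - Fstar f psi D"
    "\<lambda>k. (x k - PO f psi D (x k)) \<bullet> (H k *v (x k - PO f psi D (x k)))" "\<lambda>k. 1" \<gamma> \<eta> "Mt * R0\<^sup>2"
    using assms by (intro alg2_descent_sequence) auto
  show ?thesis
    using linear_rate sublinear_rate first_index_bound[of _ 1] unfolding is_k0_def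
    by (auto simp: mult.assoc)
qed

theorem theorem1:
  fixes f psi :: "real^'n \<Rightarrow> real" and g :: "real^'n \<Rightarrow> real^'n"
    and D :: "(real^'n) set" and L :: real
  assumes A1: "assumption1 f g L psi D"
    and fconv: "convex_on UNIV f"
    and Omega_ne: "Omega f psi D \<noteq> {}"
  shows
  "(\<forall>\<beta> \<gamma> \<eta> x H d \<alpha> R0 M.
      alg1_run f g psi D \<beta> \<gamma> \<eta> x H d \<alpha> \<and>
      level_radius f psi D (x 0) R0 \<and> R0 > 0 \<and> M > 0 \<and> (\<forall>k. mnorm (H k) \<le> M) \<and>
      (\<forall>k. psd (H k))
      \<longrightarrow>
      (\<forall>k. (x k - PO f psi D (x k)) \<bullet> (H k *v (x k - PO f psi D (x k)))
              \<le> Fv f psi (x k) - Fstar f psi D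
           \<longrightarrow> Fv f psi (x (Suc k)) - Fstar f psi D
                 \<le> (1 - (1 - \<eta>) * \<gamma> * \<alpha> k / 2) * (Fv f psi (x k) - Fstar f psi D)) \<and>
      (\<forall>k0. is_k0 f psi D x M R0 k0 \<longrightarrow>
         (\<forall>k \<ge> k0. Fv f psi (x k) - Fstar f psi D
                     \<le> 2 * M * R0\<^sup>2 / (\<gamma> * (1 - \<eta>) * (\<Sum>t = k0..<k. \<alpha> t) + 2)) \<and>
         (\<forall>\<alpha>b > 0. (\<forall>k. \<alpha>b \<le> \<alpha> k) \<longrightarrow>
            real k0 \<le> max 0 (1 + 2 / (\<gamma> * (1 - \<eta>) * \<alpha>b)
                                  * ln ((Fv f psi (x 0) - Fstar f psi D) / (M * R0\<^sup>2))))))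
   \<and>
   (\<forall>variant \<in> {1, 2}. \<forall>\<beta> \<gamma> \<eta> m0 M0 x H0 dt J H d R0.
      alg2_run variant f g psi D \<beta> \<gamma> \<eta> m0 M0 x H0 dt J H d \<and>
      level_radius f psi D (x 0) R0 \<and> R0 > 0 \<and>
      M0 > 0 \<and> m0 \<le> M0 \<and> (variant = 1 \<longrightarrow> m0 > 0) \<and>
      (\<forall>k. loewner_between m0 (H0 k) M0) \<and> (\<forall>k. psd (H k))
      \<longrightarrow>
      (let Mt = (if variant = 1 then Mt1 L \<beta> \<gamma> m0 M0 \<eta> else Mt2 L \<beta> \<gamma> m0 M0 \<eta>) in
      (\<forall>k. (x k - PO f psi D (x k)) \<bullet> (H k *v (x k - PO f psi D (x k)))
              \<le> Fv f psi (x k) - Fstar f psi D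
           \<longrightarrow> Fv f psi (x (Suc k)) - Fstar f psi D
                 \<le> (1 - (1 - \<eta>) * \<gamma> / 2) * (Fv f psi (x k) - Fstar f psi D)) \<and>
      (\<forall>k0. is_k0 f psi D x Mt R0 k0 \<longrightarrow>
         (\<forall>k \<ge> k0. Fv f psi (x k) - Fstar f psi D
                     \<le> 2 * Mt * R0\<^sup>2 / (\<gamma> * (1 - \<eta>) * real (k - k0) + 2)) \<and>
         real k0 \<le> max 0 (1 + 2 / (\<gamma> * (1 - \<eta>))
                               * ln ((Fv f psi (x 0) - Fstar f psi D) / (Mt * R0\<^sup>2))))))"
proof ((rule conjI; intro allI ballI impI), goal_cases)
  case 1
  then show ?case
    by (intro alg1_convergence[OF A1 fconv Omega_ne]) auto
next
  case 2
  then show ?case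
    unfolding Let_def by (intro alg2_convergence[OF A1 fconv Omega_ne _ _ _ _ _ _ refl]) auto
qed

end
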